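(* Let $r\ge 2$ be an integer and let $f\in\mathcal{P}$ (i.e. $f\in\mathcal{P}_c$ for some constant $c>0$). Then $f$ is nowhere differentiable in $\mathbb{R}$.
   Context: $C_p(\mathbb{R})$ denotes the set of all continuous functions $f:\mathbb{R}\to\mathbb{R}$ that are periodic with period $1$ and satisfy $f(0)=0$. Fix an integer $r\ge 2$. For $f\in C_p(\mathbb{R})$ and $(n,k,y)\in\mathbb{N}_0\times\mathbb{Z}\times(0,1)$ (where $\mathbb{N}_0=\mathbb{N}\cup\{0\}$) define $\delta^+_{n,k}(y;f)=\dfrac{f(\frac{k+1}{r^n})-f(\frac{k+y}{r^n})}{\frac{1-y}{r^n}}$ and $\delta^-_{n,k}(y;f)=\dfrac{f(\frac{k+y}{r^n})-f(\frac{k}{r^n})}{\frac{y}{r^n}}$. For a constant $c>0$, $\mathcal{P}_c$ is the set of $f\in C_p(\mathbb{R})$ such that $\delta^+_{n,k}(y;f)-\delta^-_{n,k}(y;f)\le -c$ for all $(n,k,y)\in\mathbb{N}_0\times\mathbb{Z}\times(0,1)$, and $\mathcal{P}=\bigcup_{c>0}\mathcal{P}_c$ (these depend on $r$). *)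

theory Defs
  imports "HOL-Analysis.Analysis"
begin

definition Cp :: "(real \<Rightarrow> real) set" where
  "Cp = {f. continuous_on UNIV f \<and> (\<forall>x. f (x + 1) = f x) \<and> f 0 = 0}"

definition delta_plus :: "nat \<Rightarrow> nat \<Rightarrow> int \<Rightarrow> real \<Rightarrow> (real \<Rightarrow> real) \<Rightarrow> real" where
  "delta_plus r n k y f =
     (f ((real_of_int k + 1) / real r ^ n) - f ((real_of_int k + y) / real r ^ n))
       / ((1 - y) / real r ^ n)"

definition delta_minus :: "nat \<Rightarrow> nat \<Rightarrow> int \<Rightarrow> real \<Rightarrow> (real \<Rightarrow> real) \<Rightarrow> real" where
  "delta_minus r n k y f =
     (f ((real_of_int k + y) / real r ^ n) - f (real_of_int k / real r ^ n))
       / (y / real r ^ n)"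

definition Pc :: "nat \<Rightarrow> real \<Rightarrow> (real \<Rightarrow> real) set" where
  "Pc r c = {f \<in> Cp. \<forall>n::nat. \<forall>k::int. \<forall>y\<in>{0<..<1}.
              delta_plus r n k y f - delta_minus r n k y f \<le> - c}"

definition PP :: "nat \<Rightarrow> (real \<Rightarrow> real) set" where
  "PP r = (\<Union>c\<in>{0<..}. Pc r c)"

end

theory Submission
  imports Defs
begin

text \<open>Taking \<open>y = 1/2\<close>, the defining inequality of \<open>Pc r c\<close> says that on every \<open>r\<close>-adic interval
  \<open>[a, b]\<close> the second difference \<open>f a + f b - 2 f ((a + b) / 2)\<close> is at most \<open>-c (b - a) / 2\<close>.
  At a point of differentiability, however, the second difference over intervals \<open>[a, b]\<close> containing
  the point is \<open>o(b - a)\<close>, since the linear parts cancel; and every point lies in \<open>r\<close>-adic intervals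
  of arbitrarily small length.\<close>

lemma second_difference_little_o:
  fixes f :: "real \<Rightarrow> real"
  assumes "(f has_real_derivative L) (at x)" and "e > 0"
  obtains d where "d > 0"
    and "\<And>a b. a \<le> x \<Longrightarrow> x \<le> b \<Longrightarrow> b - a < d \<Longrightarrow>
           \<bar>f a + f b - 2 * f ((a + b) / 2)\<bar> \<le> e * (b - a)"
proof -
  have "e / 4 > 0" using \<open>e > 0\<close> by simp
  then obtain d where "d > 0"
    and rem: "\<And>y. \<bar>y - x\<bar> < d \<Longrightarrow> \<bar>f y - f x - L * (y - x)\<bar> \<le> e / 4 * \<bar>y - x\<bar>"
    using assms(1) unfolding has_field_derivative_def has_derivative_at_alt real_norm_def
    by blast
  have "\<bar>f a + f b - 2 * f ((a + b) / 2)\<bar> \<le> e * (b - a)"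
    if "a \<le> x" "x \<le> b" "b - a < d" for a b
  proof -
    have rem_le: "\<bar>f y - f x - L * (y - x)\<bar> \<le> e / 4 * (b - a)" if "a \<le> y" "y \<le> b" for y
    proof -
      have "\<bar>y - x\<bar> \<le> b - a" using that \<open>a \<le> x\<close> \<open>x \<le> b\<close> by linarith
      then have "e / 4 * \<bar>y - x\<bar> \<le> e / 4 * (b - a)"
        using \<open>e > 0\<close> by (intro mult_left_mono) auto
      with rem[of y] \<open>\<bar>y - x\<bar> \<le> b - a\<close> \<open>b - a < d\<close> show ?thesis by linarith
    qed
    have "a \<le> b" using that by linarith
    then have "\<bar>f a - f x - L * (a - x)\<bar> \<le> e / 4 * (b - a)"
      and "\<bar>f b - f x - L * (b - x)\<bar> \<le> e / 4 * (b - a)"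
      and "\<bar>f ((a + b) / 2) - f x - L * ((a + b) / 2 - x)\<bar> \<le> e / 4 * (b - a)"
      using rem_le[of a] rem_le[of b] rem_le[of "(a + b) / 2"] by simp_all
    moreover have "L * (a - x) + L * (b - x) - 2 * (L * ((a + b) / 2 - x)) = 0"
      by (simp add: algebra_simps)
    ultimately show ?thesis unfolding abs_le_iff by linarith
  qed
  with \<open>d > 0\<close> show thesis by (rule that)
qed

lemma Pc_second_difference_le:
  fixes k :: int
  assumes "f \<in> Pc r c" and "r > 0"
  shows "f (k / real r ^ n) + f ((k + 1) / real r ^ n) - 2 * f ((k + 1/2) / real r ^ n)
           \<le> - c / (2 * real r ^ n)"
proof -
  define R where "R = real r ^ n"
  have "R > 0" using \<open>r > 0\<close> unfolding R_def by simp
  have "delta_plus r n k (1/2) f - delta_minus r n k (1/2) f \<le> - c"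
    using assms(1) unfolding Pc_def by simp
  then have "2 * R * (f (k / R) + f ((k + 1) / R) - 2 * f ((k + 1/2) / R)) \<le> - c"
    unfolding delta_plus_def delta_minus_def R_def[symmetric] by (simp add: field_simps)
  with \<open>R > 0\<close> show ?thesis unfolding R_def[symmetric] by (simp add: field_simps)
qed

lemma small_r_adic_interval_containing:
  fixes r :: nat
  assumes "r \<ge> 2" and "d > 0"
  obtains n :: nat and k :: int
  where "k / real r ^ n \<le> x" "x \<le> (k + 1) / real r ^ n" "1 / real r ^ n < d"
proof -
  obtain n where "(1 / real r) ^ n < d"
    using real_arch_pow_inv[OF \<open>d > 0\<close>, of "1 / real r"] assms(1) by auto
  moreover define R where "R = real r ^ n"
  ultimately have "R > 0" and "1 / R < d"
    using assms(1) by (auto simp: power_divide)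
  have "\<lfloor>x * R\<rfloor> / R \<le> x" "x \<le> (\<lfloor>x * R\<rfloor> + 1) / R"
    using \<open>R > 0\<close> by (auto simp: field_simps) linarith+
  with \<open>1 / R < d\<close> show thesis
    using that[of "\<lfloor>x * R\<rfloor>" n] unfolding R_def by simp
qed

theorem theorem2p1:
  fixes r :: nat and f :: "real \<Rightarrow> real"
  assumes "r \<ge> 2"
    and "f \<in> PP r"
  shows "\<forall>x::real. \<not> f differentiable (at x)"
proof (intro allI notI)
  fix x :: real
  assume "f differentiable (at x)"
  then obtain L where L: "(f has_real_derivative L) (at x)"
    using real_differentiable_def by blast
  obtain c where "c > 0" and f_Pc: "f \<in> Pc r c"
    using assms(2) unfolding PP_def by auto
  obtain d where "d > 0" and small: "\<And>a b. a \<le> x \<Longrightarrow> x \<le> b \<Longrightarrow> b - a < d \<Longrightarrow>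
      \<bar>f a + f b - 2 * f ((a + b) / 2)\<bar> \<le> c / 4 * (b - a)"
    using second_difference_little_o[OF L, of "c / 4"] \<open>c > 0\<close> by auto
  obtain n and k :: int where "k / real r ^ n \<le> x" "x \<le> (k + 1) / real r ^ n" "1 / real r ^ n < d"
    using small_r_adic_interval_containing[OF assms(1) \<open>d > 0\<close>] by blast
  moreover define R where "R = real r ^ n"
  moreover have "R > 0" using assms(1) unfolding R_def by simp
  moreover have width: "(k + 1) / R - k / R = 1 / R"
    and mid: "(k / R + (k + 1) / R) / 2 = (k + 1/2) / R"
    using \<open>R > 0\<close> by (auto simp: field_simps)
  ultimately have "\<bar>f (k / R) + f ((k + 1) / R) - 2 * f ((k + 1/2) / R)\<bar> \<le> c / 4 * (1 / R)"
    using small[of "k / R" "(k + 1) / R"] by (simp only: width mid)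
  moreover have "f (k / R) + f ((k + 1) / R) - 2 * f ((k + 1/2) / R) \<le> - c / (2 * R)"
    using Pc_second_difference_le[OF f_Pc] assms(1) unfolding R_def by simp
  moreover have "c / 4 * (1 / R) < c / (2 * R)"
    using \<open>c > 0\<close> \<open>R > 0\<close> by (simp add: field_simps)
  ultimately show False unfolding abs_le_iff by linarith
qed

end
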